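(* Let $r>0$, $p\in(0,1)$, and let $X_1,\dots,X_n$ be i.i.d. samples of a negative binomial random variable $X$ with $\Pr\{X=x\}=\frac{\Gamma(x+r)}{\Gamma(x+1)\Gamma(r)}(1-p)^xp^r$ for $x=0,1,2,\dots$. Let $T(x)=\frac{r+x}{r}$ and $\theta=\frac1p$. Then $$\Pr\Big\{\sum_{i=1}^nT(X_i)\ge nz\Big\}\le\left[\frac{pz-p}{1-p}\Big(\frac{z-zp}{z-1}\Big)^z\right]^{nr}\quad\text{for } z\ge\theta=\tfrac1p,$$ $$\Pr\Big\{\sum_{i=1}^nT(X_i)\le nz\Big\}\le\left[\frac{pz-p}{1-p}\Big(\frac{z-zp}{z-1}\Big)^z\right]^{nr}\quad\text{for } 1<z\le\theta=\tfrac1p.$$ *)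

theory Defs
  imports "HOL-Probability.Probability"
begin

definition negbin_mass :: "real \<Rightarrow> real \<Rightarrow> nat \<Rightarrow> real" where
  "negbin_mass r p x = Gamma (real x + r) / (Gamma (real x + 1) * Gamma r) * (1 - p) ^ x * p powr r"

definition nbT :: "real \<Rightarrow> nat \<Rightarrow> real" where
  "nbT r x = (r + real x) / r"

definition nb_bound :: "real \<Rightarrow> real \<Rightarrow> nat \<Rightarrow> real \<Rightarrow> real" where
  "nb_bound r p n z = ((p * z - p) / (1 - p) * ((z - z * p) / (z - 1)) powr z) powr (real n * r)"

end

theory Submission
  imports Defs
begin

text \<open>
  Chernoff's method with the probability generating function: for every \<open>t > 0\<close> with
  \<open>(1 - p) t < 1\<close> the negative binomial variable has \<open>E[t^X] = (p / (1 - (1 - p) t))^r\<close>,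
  by the generalised binomial series for \<open>(1 - (1 - p) t)^(-r)\<close>. Since
  \<open>\<Sum> T(X_i) \<ge> n z\<close> means \<open>\<Sum> X_i \<ge> n r (z - 1)\<close>, Markov's inequality applied to
  \<open>t^(\<Sum> X_i)\<close> for \<open>t \<ge> 1\<close> (and to the reversed event for \<open>t \<le> 1\<close>) gives
  \<open>((p / (1 - (1 - p) t))^r)^n / t^(n r (z - 1))\<close>. The optimal choice
  \<open>t = (z - 1) / (z (1 - p))\<close> satisfies \<open>t \<ge> 1\<close> exactly when \<open>z \<ge> 1/p\<close>, and turns
  this expression into the stated bound.
\<close>

lemma nn_integral_nat_valued_eq_suminf:
  assumes "Y \<in> measurable M (count_space UNIV)"
  shows "(\<integral>\<^sup>+\<omega>. g (Y \<omega>) \<partial>M) = (\<Sum>x::nat. g x * emeasure M {\<omega> \<in> space M. Y \<omega> = x})"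
proof -
  have sets: "{\<omega> \<in> space M. Y \<omega> = x} \<in> sets M" for x
    using measurable_sets[OF assms, of "{x}"] by (simp add: vimage_def Int_def conj_commute)
  have "g (Y \<omega>) = (\<Sum>x. g x * indicator {\<omega> \<in> space M. Y \<omega> = x} \<omega>)" if "\<omega> \<in> space M" for \<omega>
    using that by (subst suminf_finite[of "{Y \<omega>}"]) auto
  then have "(\<integral>\<^sup>+\<omega>. g (Y \<omega>) \<partial>M) = (\<integral>\<^sup>+\<omega>. (\<Sum>x. g x * indicator {\<omega> \<in> space M. Y \<omega> = x} \<omega>) \<partial>M)"
    by (rule nn_integral_cong)
  also have "\<dots> = (\<Sum>x. \<integral>\<^sup>+\<omega>. g x * indicator {\<omega> \<in> space M. Y \<omega> = x} \<omega> \<partial>M)"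
    using sets by (intro nn_integral_suminf) auto
  also have "\<dots> = (\<Sum>x. g x * emeasure M {\<omega> \<in> space M. Y \<omega> = x})"
    using sets by (simp add: nn_integral_cmult_indicator)
  finally show ?thesis .
qed

context prob_space
begin

lemma chernoff_bound_indep_nat:
  fixes X :: "nat \<Rightarrow> 'a \<Rightarrow> nat"
  assumes t: "0 < t" and c: "0 \<le> c"
    and meas: "\<forall>i<n. X i \<in> measurable M (count_space UNIV)"
    and indep: "indep_vars (\<lambda>_. count_space UNIV) X {..<n}"
    and gen: "\<And>i. i < n \<Longrightarrow> (\<integral>\<^sup>+\<omega>. ennreal (t ^ X i \<omega>) \<partial>M) = ennreal c"
    and event: "\<And>\<omega>. \<omega> \<in> E \<Longrightarrow> t powr a \<le> t ^ (\<Sum>i<n. X i \<omega>)"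
  shows "measure M E \<le> c ^ n / t powr a"
proof (cases "E \<in> events")
  case False
  then show ?thesis by (simp add: measure_notin_sets c)
next
  case True
  have measurable: "(\<lambda>\<omega>. ennreal (t ^ X i \<omega>)) \<in> borel_measurable M" if "i < n" for i
    using measurable_compose[of "X i" M "count_space UNIV" "\<lambda>x. ennreal (t ^ x)"] meas that
    by simp
  have indicator_le: "indicator E \<omega> \<le> ennreal (1 / t powr a) * (\<Prod>i<n. ennreal (t ^ X i \<omega>))" for \<omega>
  proof (cases "\<omega> \<in> E")
    case True
    have "1 \<le> 1 / t powr a * (\<Prod>i<n. t ^ X i \<omega>)"
      using event[OF True] t by (simp add: power_sum)
    then show ?thesis
      using True t by (simp add: prod_ennreal prod_nonneg flip: ennreal_mult'')
  qed simp
  have "ennreal (measure M E) = (\<integral>\<^sup>+\<omega>. indicator E \<omega> \<partial>M)"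
    using True by (simp add: emeasure_eq_measure)
  also have "\<dots> \<le> (\<integral>\<^sup>+\<omega>. ennreal (1 / t powr a) * (\<Prod>i<n. ennreal (t ^ X i \<omega>)) \<partial>M)"
    by (intro nn_integral_mono indicator_le)
  also have "\<dots> = ennreal (1 / t powr a) * (\<integral>\<^sup>+\<omega>. (\<Prod>i<n. ennreal (t ^ X i \<omega>)) \<partial>M)"
    using measurable by (intro nn_integral_cmult) (auto intro!: borel_measurable_prod_ennreal)
  also have "\<dots> = ennreal (1 / t powr a) * (\<Prod>i<n. \<integral>\<^sup>+\<omega>. ennreal (t ^ X i \<omega>) \<partial>M)"
    using indep_vars_compose2[OF indep, of "\<lambda>_ x. ennreal (t ^ x)" "\<lambda>_. borel"]
    by (subst indep_vars_nn_integral) auto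
  also have "\<dots> = ennreal (c ^ n / t powr a)"
    using c by (simp add: gen ennreal_power flip: ennreal_mult'')
  finally show ?thesis
    using c t by (subst (asm) ennreal_le_iff) auto
qed

end

lemma negbin_mass_nonneg:
  assumes "r > 0" "0 < p" "p \<le> 1"
  shows "0 \<le> negbin_mass r p x"
  using assms unfolding negbin_mass_def
  by (intro mult_nonneg_nonneg divide_nonneg_nonneg) (auto intro!: Gamma_real_pos less_imp_le add_nonneg_pos)

lemma negbin_mass_eq_gbinomial:
  assumes "r > 0"
  shows "negbin_mass r p x = p powr r * ((- r gchoose x) * (p - 1) ^ x)"
proof -
  have "r \<notin> \<int>\<^sub>\<le>\<^sub>0"
    using assms nonpos_Ints_nonpos by force
  then have "pochhammer r x = Gamma (real x + r) / Gamma r"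
    using pochhammer_Gamma[of r x] by (simp add: add.commute)
  moreover have "Gamma (real x + 1) = fact x"
    using Gamma_fact[of x] by (simp add: add.commute)
  moreover have "(- r gchoose x) * (p - 1) ^ x = pochhammer r x / fact x * (1 - p) ^ x"
  proof -
    have "(p - 1) ^ x = (-1) ^ x * (1 - p) ^ x"
      using power_minus[of "1 - p" x] by simp
    moreover have "(-1::real) ^ x * (-1) ^ x = 1"
      by (simp flip: power_add)
    ultimately show ?thesis
      by (simp add: gbinomial_pochhammer)
  qed
  ultimately show ?thesis
    unfolding negbin_mass_def by (simp add: mult_ac)
qed

lemma negbin_generating_function_sums:
  assumes r: "r > 0" and p: "0 < p" and t: "\<bar>(1 - p) * t\<bar> < 1"
  shows "(\<lambda>x. negbin_mass r p x * t ^ x) sums ((p / (1 - (1 - p) * t)) powr r)"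
proof -
  have base: "1 + (p - 1) * t = 1 - (1 - p) * t"
    by (simp add: algebra_simps)
  have "\<bar>(p - 1) * t\<bar> < 1"
    using t by (simp add: abs_mult abs_minus_commute)
  then have "(\<lambda>x. p powr r * ((- r gchoose x) * ((p - 1) * t) ^ x)) sums (p powr r * (1 - (1 - p) * t) powr (- r))"
    unfolding base[symmetric] by (intro sums_mult gen_binomial_real)
  moreover have "p powr r * (1 - (1 - p) * t) powr (- r) = (p / (1 - (1 - p) * t)) powr r"
    using p t by (subst powr_divide) (auto simp: powr_minus divide_inverse)
  moreover have "negbin_mass r p x * t ^ x = p powr r * ((- r gchoose x) * ((p - 1) * t) ^ x)" for x
    using r by (simp add: negbin_mass_eq_gbinomial power_mult_distrib mult_ac)
  ultimately show ?thesis
    by simp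
qed

lemma nn_integral_power_negbin:
  assumes M: "prob_space M" and r: "r > 0" and p: "0 < p" "p < 1" and t: "0 \<le> t" "(1 - p) * t < 1"
    and meas: "Y \<in> measurable M (count_space UNIV)"
    and distr: "\<forall>x. measure M {\<omega> \<in> space M. Y \<omega> = x} = negbin_mass r p x"
  shows "(\<integral>\<^sup>+\<omega>. ennreal (t ^ Y \<omega>) \<partial>M) = ennreal ((p / (1 - (1 - p) * t)) powr r)"
proof -
  interpret prob_space M by (fact M)
  have sums: "(\<lambda>x. negbin_mass r p x * t ^ x) sums ((p / (1 - (1 - p) * t)) powr r)"
    using p t by (intro negbin_generating_function_sums[OF r p(1)]) simp
  have "(\<integral>\<^sup>+\<omega>. ennreal (t ^ Y \<omega>) \<partial>M) = (\<Sum>x. ennreal (negbin_mass r p x * t ^ x))"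
    using t distr negbin_mass_nonneg[OF r p(1) less_imp_le[OF p(2)]]
    by (subst nn_integral_nat_valued_eq_suminf[OF meas]) (simp add: emeasure_eq_measure ennreal_mult'' mult.commute)
  also have "\<dots> = ennreal ((p / (1 - (1 - p) * t)) powr r)"
    using sums negbin_mass_nonneg[OF r p(1) less_imp_le[OF p(2)]] t by (subst suminf_ennreal2) (auto simp: sums_iff)
  finally show ?thesis .
qed

lemma negbin_chernoff_bound:
  fixes X :: "nat \<Rightarrow> 'a \<Rightarrow> nat"
  assumes M: "prob_space M" and r: "r > 0" and p: "0 < p" "p < 1" and t: "0 < t" "(1 - p) * t < 1"
    and meas: "\<forall>i<n. X i \<in> measurable M (count_space UNIV)"
    and indep: "prob_space.indep_vars M (\<lambda>_. count_space UNIV) X {..<n}"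
    and distr: "\<forall>i<n. \<forall>x. measure M {\<omega> \<in> space M. X i \<omega> = x} = negbin_mass r p x"
    and event: "\<And>\<omega>. \<omega> \<in> E \<Longrightarrow> t powr a \<le> t ^ (\<Sum>i<n. X i \<omega>)"
  shows "measure M E \<le> ((p / (1 - (1 - p) * t)) powr r) ^ n / t powr a"
  using t meas distr
  by (intro prob_space.chernoff_bound_indep_nat[OF M t(1) _ meas indep _ event]
      nn_integral_power_negbin[OF M r p]) auto

lemma nb_bound_eq_chernoff_at_optimum:
  assumes p: "0 < p" "p < 1" and z: "1 < z"
  defines "t \<equiv> (z - 1) / (z * (1 - p))"
  shows "((p / (1 - (1 - p) * t)) powr r) ^ n / t powr (real n * r * (z - 1)) = nb_bound r p n z"
proof -
  have t_pos: "0 < t"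
    using p z unfolding t_def by simp
  have "p / (1 - (1 - p) * t) = p * z"
    using p z unfolding t_def by (simp add: field_simps)
  moreover have "((p * z) powr r) ^ n = (p * z) powr (real n * r)"
    using p z by (simp add: powr_powr mult.commute flip: powr_realpow)
  moreover have "t powr (real n * r * (z - 1)) = (t powr z / t) powr (real n * r)"
  proof -
    have "t powr z / t = t powr (z - 1)"
      using t_pos by (simp add: powr_diff)
    then show ?thesis
      by (simp add: powr_powr mult_ac)
  qed
  moreover have "p * z / (t powr z / t) = (p * z - p) / (1 - p) * ((z - z * p) / (z - 1)) powr z"
  proof -
    have "(z - z * p) / (z - 1) = 1 / t"
      using p z unfolding t_def by (simp add: field_simps)
    then show ?thesis
      using t_pos p z by (simp add: powr_divide t_def field_simps)
  qed
  ultimately show ?thesis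
    unfolding nb_bound_def by (simp add: powr_divide[symmetric])
qed

lemma negbin_chernoff_bound_at_optimum:
  fixes X :: "nat \<Rightarrow> 'a \<Rightarrow> nat"
  assumes M: "prob_space M" and r: "r > 0" and p: "0 < p" "p < 1" and z: "1 < z"
    and meas: "\<forall>i<n. X i \<in> measurable M (count_space UNIV)"
    and indep: "prob_space.indep_vars M (\<lambda>_. count_space UNIV) X {..<n}"
    and distr: "\<forall>i<n. \<forall>x. measure M {\<omega> \<in> space M. X i \<omega> = x} = negbin_mass r p x"
  defines "t \<equiv> (z - 1) / (z * (1 - p))"
  assumes event: "\<And>\<omega>. \<omega> \<in> E \<Longrightarrow> t powr (real n * r * (z - 1)) \<le> t ^ (\<Sum>i<n. X i \<omega>)"
  shows "measure M E \<le> nb_bound r p n z"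
proof -
  have "0 < t" "(1 - p) * t < 1"
    using p z unfolding t_def by (simp_all add: field_simps)
  then have "measure M E \<le> ((p / (1 - (1 - p) * t)) powr r) ^ n / t powr (real n * r * (z - 1))"
    by (rule negbin_chernoff_bound[OF M r p _ _ meas indep distr event])
  also have "\<dots> = nb_bound r p n z"
    using nb_bound_eq_chernoff_at_optimum[OF p z] unfolding t_def .
  finally show ?thesis .
qed

lemma sum_nbT_eq:
  assumes "r > 0"
  shows "(\<Sum>i<n. nbT r (x i)) = real n + real (\<Sum>i<n. x i) / r"
  using assms by (simp add: nbT_def add_divide_distrib sum.distrib sum_divide_distrib)

lemma powr_le_power_of_ge_one:
  assumes "1 \<le> t" "a \<le> real k"
  shows "t powr a \<le> t ^ k"
  using powr_mono[OF assms(2,1)] assms(1) by (simp add: powr_realpow)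

lemma powr_le_power_of_le_one:
  assumes "0 < t" "t \<le> 1" "real k \<le> a"
  shows "t powr a \<le> t ^ k"
  using powr_mono'[OF assms(3) _ assms(2)] assms(1) by (simp add: powr_realpow)

theorem corollary3:
  fixes M :: "'a measure" and X :: "nat \<Rightarrow> 'a \<Rightarrow> nat"
    and r p z :: real and n :: nat
  assumes "prob_space M"
    and "r > 0" and "0 < p" and "p < 1"
    and "\<forall>i<n. X i \<in> measurable M (count_space UNIV)"
    and "prob_space.indep_vars M (\<lambda>_. count_space UNIV) X {..<n}"
    and "\<forall>i<n. \<forall>x. measure M {\<omega> \<in> space M. X i \<omega> = x} = negbin_mass r p x"
  shows "(z \<ge> 1 / p \<longrightarrow>
            measure M {\<omega> \<in> space M. (\<Sum>i<n. nbT r (X i \<omega>)) \<ge> real n * z} \<le> nb_bound r p n z)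
       \<and> (1 < z \<and> z \<le> 1 / p \<longrightarrow>
            measure M {\<omega> \<in> space M. (\<Sum>i<n. nbT r (X i \<omega>)) \<le> real n * z} \<le> nb_bound r p n z)"
proof -
  define t where "t = (z - 1) / (z * (1 - p))"
  note chernoff = negbin_chernoff_bound_at_optimum[OF assms(1-4) _ assms(5-7), where z = z, folded t_def]
  have threshold: "1 \<le> t \<longleftrightarrow> 1 / p \<le> z" "0 < t \<and> t \<le> 1 \<longleftrightarrow> z \<le> 1 / p" if "1 < z"
    using that assms(3,4) unfolding t_def by (simp_all add: field_simps)
  have events: "real n * z \<le> (\<Sum>i<n. nbT r (X i \<omega>)) \<longleftrightarrow> real n * r * (z - 1) \<le> real (\<Sum>i<n. X i \<omega>)"
    "(\<Sum>i<n. nbT r (X i \<omega>)) \<le> real n * z \<longleftrightarrow> real (\<Sum>i<n. X i \<omega>) \<le> real n * r * (z - 1)" for \<omega>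
    using assms(2) by (simp_all add: sum_nbT_eq field_simps)
  show ?thesis
  proof (intro conjI impI)
    assume "1 / p \<le> z"
    moreover from this have "1 < z"
      using assms(3,4) less_le_trans[of 1 "1 / p" z] by simp
    ultimately show "measure M {\<omega> \<in> space M. (\<Sum>i<n. nbT r (X i \<omega>)) \<ge> real n * z} \<le> nb_bound r p n z"
      using threshold by (intro chernoff powr_le_power_of_ge_one) (auto simp: events)
  next
    assume "1 < z \<and> z \<le> 1 / p"
    then show "measure M {\<omega> \<in> space M. (\<Sum>i<n. nbT r (X i \<omega>)) \<le> real n * z} \<le> nb_bound r p n z"
      using threshold by (intro chernoff powr_le_power_of_le_one) (auto simp: events)
  qed
qed

end
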